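(* There is an absolute constant $C>0$ such that the following holds. Let $(a_n)_{n\ge1}$ be real with $|a_n|\le1$ and $\gamma_n=\operatorname{sign}(a_n)$. Let $\ell\in\{0,1,2,3\}$, $k\ge1$, $q=q^{(\ell)}_k$, let $M$ be an integer with $1\le M\le L^{(\ell)}_k$, and let $r,c$ be integers in $[0,q]$. Let $x\in P^{(\ell)}\times\{-1,0,1\}^{\mathbb Z}$ satisfy, for every integer $n$ with $q\le n<q^{(\ell)}_{k+1}$, $$\Pi_1x(n)=(\sigma^{-r}s^{(\ell)}_k)(n),\qquad \Pi_2x(n)=\gamma(qn+c).$$ Then $$\Big|\frac1{qM}\sum_{n=1}^{qM}g(T^nx)a(n)-A^{q,M}_{r,c}\Big|\le C\frac{q}{M}.$$
   Context: Let $\tau:\mathbb N\to(0,\infty)$ be non-increasing with $\tau(n)\to0$. Fix integers $2\le q_1<q_2<\cdots$ such that for every $k\ge1$: (i) $q_{k+1}>q_k^4+3q_k$; (ii) $\tau(\lceil q_{k+1}/3\rceil)<\frac1{16q_k}$. For $k\ge1$ put $q^{(0)}_k=q_{2k}$, $q^{(1)}_k=q_{2k+1}$, $q^{(2)}_k=q^{(0)}_k-1$, $q^{(3)}_k=q^{(1)}_k-1$, and $L^{(i)}_k=\lfloor q^{(i)}_{k+1}/(3q^{(i)}_k)\rfloor$. Let $s^{(i)}_k\in\{-1,0,1\}^{\mathbb N}$ (indices $n\ge1$) be given by $s^{(i)}_k(n)=1$ if $n=jq^{(i)}_k$ with $1\le j\le L^{(i)}_k$, $s^{(i)}_k(n)=-1$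 if $n=jq^{(i)}_k$ with $L^{(i)}_k<j\le2L^{(i)}_k$, and $s^{(i)}_k(n)=0$ otherwise. For $w\in\{-1,0,1\}^{\mathbb N}$ and $p\in\mathbb N_0$ let $\sigma^{-p}w$ be defined by $(\sigma^{-p}w)(n)=0$ for $1\le n\le p$ and $(\sigma^{-p}w)(n)=w(n-p)$ for $n>p$. For $l\le m$ write $w|_l^m=(w_l,\dots,w_m)$. Let $R^{(i)}_k=\{(\sigma^{-p}s^{(i)}_k)|_{q^{(i)}_k}^{q^{(i)}_{k+1}-1}:p=0,1,\dots,q^{(i)}_k\}$ and $P^{(i)}=\{y\in\{-1,0,1\}^{\mathbb N}: y(n)=0\text{ for }1\le n<q^{(i)}_1,\ y|_{q^{(i)}_k}^{q^{(i)}_{k+1}-1}\in R^{(i)}_k\text{ for all }k\ge1\}$. Let $Z=\{-1,0,1\}^{\mathbb N}\times\{-1,0,1\}^{\mathbb Z}$, with coordinate projections $\Pi_1,\Pi_2$; $\sigma$ is the left shift $(\sigma u)_m=u_{m+1}$ (invertible on $\{-1,0,1\}^{\mathbb Z}$); $T:Z\to Z$, $T(y,z)=(\sigma y,\sigma^{y_1}z)$; $g:Z\to\{-1,0,1\}$, $g(y,z)=z_0$. For integers $q,M\ge1$ and $r,c\in[0,q]$ set $$A^{q,M}_{r,c}=\frac1{qM}\sum_{b=r}^{q-1+r}\sum_{n=1}^M\gamma(qn+c)\,a(qn+b).$$ *)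

theory Defs
  imports Complex_Main
begin

text \<open>The base sequence q_1 < q_2 < ... is a function q :: nat => nat (index 0 unused).
  Sequences in {-1,0,1}^N are functions nat => int (index 0 unused),
  sequences in {-1,0,1}^Z are functions int => int.\<close>

definition qq :: "(nat \<Rightarrow> nat) \<Rightarrow> nat \<Rightarrow> nat \<Rightarrow> nat" where
  "qq q i k = (if i = 0 then q (2*k) else if i = 1 then q (2*k+1)
               else if i = 2 then q (2*k) - 1 else q (2*k+1) - 1)"

definition LL :: "(nat \<Rightarrow> nat) \<Rightarrow> nat \<Rightarrow> nat \<Rightarrow> nat" where
  "LL q i k = nat \<lfloor>real (qq q i (k+1)) / (3 * real (qq q i k))\<rfloor>"

definition sseq :: "(nat \<Rightarrow> nat) \<Rightarrow> nat \<Rightarrow> nat \<Rightarrow> nat \<Rightarrow> int" where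
  "sseq q i k n =
     (if \<exists>j. 1 \<le> j \<and> j \<le> LL q i k \<and> n = j * qq q i k then 1
      else if \<exists>j. LL q i k < j \<and> j \<le> 2 * LL q i k \<and> n = j * qq q i k then -1
      else 0)"

definition shiftR :: "nat \<Rightarrow> (nat \<Rightarrow> int) \<Rightarrow> nat \<Rightarrow> int" where
  "shiftR p w n = (if n \<le> p then 0 else w (n - p))"

definition restr :: "(nat \<Rightarrow> int) \<Rightarrow> nat \<Rightarrow> nat \<Rightarrow> int list" where
  "restr w l m = map w [l..<Suc m]"

definition RR :: "(nat \<Rightarrow> nat) \<Rightarrow> nat \<Rightarrow> nat \<Rightarrow> int list set" where
  "RR q i k = {restr (shiftR p (sseq q i k)) (qq q i k) (qq q i (k+1) - 1) | p. p \<le> qq q i k}"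

definition PP :: "(nat \<Rightarrow> nat) \<Rightarrow> nat \<Rightarrow> (nat \<Rightarrow> int) set" where
  "PP q i = {y. (\<forall>n\<ge>1. y n \<in> {-1,0,1}) \<and>
                (\<forall>n. 1 \<le> n \<and> n < qq q i 1 \<longrightarrow> y n = 0) \<and>
                (\<forall>k\<ge>1. restr y (qq q i k) (qq q i (k+1) - 1) \<in> RR q i k)}"

definition TT :: "(nat \<Rightarrow> int) \<times> (int \<Rightarrow> int) \<Rightarrow> (nat \<Rightarrow> int) \<times> (int \<Rightarrow> int)" where
  "TT x = (\<lambda>m. fst x (m+1), \<lambda>m. snd x (m + fst x 1))"

definition gg :: "(nat \<Rightarrow> int) \<times> (int \<Rightarrow> int) \<Rightarrow> int" where
  "gg x = snd x 0"

definition Aavg :: "(nat \<Rightarrow> real) \<Rightarrow> (nat \<Rightarrow> real) \<Rightarrow> nat \<Rightarrow> nat \<Rightarrow> nat \<Rightarrow> nat \<Rightarrow> real" where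
  "Aavg \<gamma> a q M r c =
     (1 / (real q * real M)) * (\<Sum>b=r..q-1+r. \<Sum>n=1..M. \<gamma> (q*n+c) * a (q*n+b))"

end

theory Submission
  imports Defs
begin

text \<open>Write \<open>x = (y, z)\<close> and \<open>S n = y 1 + \<dots> + y n\<close>; then \<open>T^n x = (\<sigma>^n y, \<sigma>^(S n) z)\<close>, so
  \<open>g (T^n x) = z (S n)\<close>. Each block of a point of \<open>P\<close> sums to zero and \<open>y\<close> vanishes before the
  first block, so \<open>S (q - 1) = 0\<close>; on the current block \<open>y\<close> is the shifted \<open>+1\<close> pattern, hence
  \<open>S n = (n - r) div q\<close> for \<open>q - 1 \<le> n \<le> qM\<close>. Once \<open>S n \<ge> q\<close>, i.e. for \<open>n > q^2 + q\<close>, the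
  hypothesis on \<open>z\<close> turns \<open>z (S n) a n\<close> into \<open>\<gamma> (q (S n) + c) a n\<close>, which is the summand of the
  average \<open>A\<close> rewritten as one sum over \<open>n = qj + b\<close>. The two sums therefore differ in
  \<open>O(q^2)\<close> terms of modulus at most one, which after division by \<open>qM\<close> gives the bound \<open>8q/M\<close>.\<close>

lemma LL_bound:
  assumes "0 < qq q l k"
  shows "3 * qq q l k * LL q l k \<le> qq q l (k+1)"
proof -
  have "real (LL q l k) \<le> real (qq q l (k+1)) / (3 * real (qq q l k))"
    unfolding LL_def by (simp add: of_nat_floor)
  then have "real (3 * qq q l k * LL q l k) \<le> real (qq q l (k+1))"
    using assms by (simp add: field_simps)
  then show ?thesis by (simp only: of_nat_le_iff)
qed

lemma shiftR_sseq:
  assumes "0 < qq q l k"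
  shows "shiftR p (sseq q l k) n =
    of_bool (n \<in> (\<lambda>j. j * qq q l k + p) ` {1..LL q l k})
    - of_bool (n \<in> (\<lambda>j. j * qq q l k + p) ` {LL q l k<..2 * LL q l k})"
proof (cases "n \<le> p")
  case True
  then show ?thesis using assms by (auto simp: shiftR_def)
next
  case False
  then obtain m where "n = m + p" "0 < m" by (metis add.commute less_imp_add_positive not_le)
  then show ?thesis using assms by (auto simp: shiftR_def sseq_def)
qed

lemma sum_shiftR_sseq_block:
  assumes "0 < qq q l k" "p \<le> qq q l k" "3 * qq q l k < qq q l (k+1)"
  shows "(\<Sum>n\<in>{qq q l k..<qq q l (k+1)}. shiftR p (sseq q l k) n) = 0"
proof -
  let ?Q = "qq q l k" and ?Q' = "qq q l (k+1)" and ?L = "LL q l k"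
  let ?pos = "\<lambda>J. (\<lambda>j. j * ?Q + p) ` J"
  have all: "?pos {1..2 * ?L} \<subseteq> {?Q..<?Q'}"
  proof
    fix n assume "n \<in> ?pos {1..2 * ?L}"
    then obtain j where j: "1 \<le> j" "j \<le> 2 * ?L" "n = j * ?Q + p" by auto
    have jQ: "j * ?Q \<le> 2 * ?L * ?Q" using j(2) by (rule mult_le_mono1)
    have "j * ?Q + p < ?Q'"
    proof (cases "?L \<le> 1")
      case True
      then have "j * ?Q \<le> 2 * ?Q" using jQ by (metis mult_le_mono1 mult_le_mono2 nat_mult_1_right order_trans)
      then show ?thesis using assms(2,3) by linarith
    next
      case False
      then have "?Q < ?L * ?Q" using assms(1) by simp
      moreover have "j * ?Q \<le> 2 * (?L * ?Q)" using jQ by (simp only: mult.assoc)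
      ultimately have "j * ?Q + p < 3 * (?L * ?Q)" using assms(2) by linarith
      then show ?thesis using LL_bound[OF assms(1)] by (simp add: ac_simps)
    qed
    moreover have "?Q \<le> j * ?Q" using j(1) by simp
    ultimately show "n \<in> {?Q..<?Q'}" unfolding j(3) atLeastLessThan_iff by linarith
  qed
  have sub: "?pos {1..?L} \<subseteq> {?Q..<?Q'}" "?pos {?L<..2*?L} \<subseteq> {?Q..<?Q'}"
    by (rule subset_trans[OF image_mono all], fastforce)+
  have inj: "inj_on (\<lambda>j. j * ?Q + p) J" for J using assms(1) by (auto simp: inj_on_def)
  have "(\<Sum>n\<in>{?Q..<?Q'}. shiftR p (sseq q l k) n) = int (card (?pos {1..?L})) - int (card (?pos {?L<..2*?L}))"
    using sub by (simp add: shiftR_sseq[OF assms(1)] sum_subtractf Int_absorb1 flip: Int_def)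
  also have "\<dots> = 0" using inj by (simp add: card_image)
  finally show ?thesis .
qed

definition partial_sum :: "(nat \<Rightarrow> int) \<Rightarrow> nat \<Rightarrow> int" where
  "partial_sum y n = (\<Sum>i=1..n. y i)"

lemma partial_sum_Suc [simp]: "partial_sum y (Suc n) = partial_sum y n + y (Suc n)"
  by (simp add: partial_sum_def)

lemma funpow_TT: "(TT ^^ n) x = (\<lambda>m. fst x (m+n), \<lambda>m. snd x (m + partial_sum (fst x) n))"
  by (induction n) (simp_all add: TT_def partial_sum_def add_ac)

lemma gg_funpow_TT: "gg ((TT ^^ n) x) = snd x (partial_sum (fst x) n)"
  by (simp add: gg_def funpow_TT)

lemma shiftR_sseq_initial:
  assumes "0 < qq q l k" "n \<le> qq q l k * LL q l k"
  shows "shiftR r (sseq q l k) n = of_bool (r < n \<and> qq q l k dvd n - r)"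
proof -
  let ?Q = "qq q l k" and ?L = "LL q l k"
  have bound: "n - r \<le> ?L * ?Q" using assms(2) by (simp add: mult.commute)
  have "(\<exists>j. 1 \<le> j \<and> j \<le> ?L \<and> n - r = j * ?Q) \<longleftrightarrow> r < n \<and> ?Q dvd n - r"
  proof
    assume "\<exists>j. 1 \<le> j \<and> j \<le> ?L \<and> n - r = j * ?Q"
    then obtain j where j: "1 \<le> j" "n - r = j * ?Q" by blast
    have "0 < n - r" unfolding j(2) using j(1) assms(1) by simp
    then have "r < n" by simp
    with j(2) show "r < n \<and> ?Q dvd n - r" by simp
  next
    assume h: "r < n \<and> ?Q dvd n - r"
    then obtain j where j: "n - r = j * ?Q" by (metis dvdE mult.commute)
    have "0 < j * ?Q" using h j by linarith
    moreover have "j * ?Q \<le> ?L * ?Q" using bound j by simp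
    ultimately show "\<exists>j. 1 \<le> j \<and> j \<le> ?L \<and> n - r = j * ?Q" using j by auto
  qed
  moreover have "\<not> (\<exists>j. ?L < j \<and> n - r = j * ?Q)"
    using bound assms(1) by (auto dest: mult_le_cancel2[THEN iffD1, rotated])
  ultimately show ?thesis by (auto simp: shiftR_def sseq_def)
qed

lemma partial_sum_eq_div:
  assumes "0 < Q" and "partial_sum y (Q - 1) = 0"
    and "\<And>i. Q \<le> i \<Longrightarrow> i \<le> N \<Longrightarrow> y i = of_bool (r < i \<and> Q dvd i - r)"
    and "Q - 1 \<le> n" "n \<le> N"
  shows "partial_sum y n = int ((n - r) div Q)"
  using assms(4,5)
proof (induction n rule: dec_induct)
  case base
  then show ?case using assms(1,2) by simp
next
  case (step n)
  then have "y (Suc n) = of_bool (r < Suc n \<and> Q dvd Suc n - r)" using assms(1,3) by simp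
  moreover have "(Suc n - r) div Q = (n - r) div Q + of_bool (r < Suc n \<and> Q dvd Suc n - r)"
    by (cases "Suc n \<le> r") (auto simp: Suc_diff_le div_Suc dvd_eq_mod_eq_0)
  ultimately show ?case using step by simp
qed

lemma sum_interval_grouped:
  fixes g :: "nat \<Rightarrow> 'a::comm_monoid_add"
  assumes "0 < Q"
  shows "(\<Sum>b=r..Q-1+r. \<Sum>j=1..M. g (Q*j+b)) = (\<Sum>n=Q+r..Q*M+Q-1+r. g n)"
proof -
  have ivl: "{m..Q-1+m} = {m..<Q+m}" for m using assms by auto
  have shift: "(\<Sum>i\<in>{k..<n+k}. h i) = (\<Sum>i<n. h (i+k))" for h :: "nat \<Rightarrow> 'a" and k n
    using sum.shift_bounds_nat_ivl[of h 0 k n] by (simp add: lessThan_atLeast0)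
  have "(\<Sum>b=r..Q-1+r. \<Sum>j=1..M. g (Q*j+b)) = (\<Sum>m<M. \<Sum>b\<in>{r..<Q+r}. g (Q*Suc m+b))"
    unfolding ivl by (subst sum.swap) (simp add: sum.atLeast1_atMost_eq)
  also have "\<dots> = (\<Sum>m<M. \<Sum>i\<in>{m*Q..<m*Q+Q}. g (i+Q+r))"
    by (simp only: shift add.commute[of "m*Q" Q for m]) (simp add: algebra_simps)
  also have "\<dots> = (\<Sum>i<M*Q. g (i+Q+r))" by (rule sum.nat_group)
  also have "\<dots> = (\<Sum>n=Q+r..Q*M+Q-1+r. g n)"
  proof -
    have "{Q+r..Q*M+Q-1+r} = {Q+r..<M*Q+(Q+r)}" using assms by (auto simp: mult.commute)
    then show ?thesis by (simp only: shift add.assoc)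
  qed
  finally show ?thesis .
qed

lemma Aavg_eq_interval_sum:
  assumes "0 < Q"
  shows "Aavg \<gamma> a Q M r c =
    (\<Sum>n=Q+r..Q*M+Q-1+r. \<gamma> (Q * ((n - r) div Q) + c) * a n) / (real Q * real M)"
proof -
  define F where "F n = \<gamma> (Q * ((n - r) div Q) + c) * a n" for n
  have "(Q*j+b - r) div Q = j" if "b \<in> {r..Q-1+r}" for j b
  proof -
    have "Q*j+b - r = (b - r) + Q*j" "b - r < Q" using that assms by auto
    then show ?thesis using assms by simp
  qed
  then have "(\<Sum>b=r..Q-1+r. \<Sum>j=1..M. \<gamma> (Q*j+c) * a (Q*j+b)) = (\<Sum>b=r..Q-1+r. \<Sum>j=1..M. F (Q*j+b))"
    by (intro sum.cong refl) (simp add: F_def)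
  also have "\<dots> = (\<Sum>n=Q+r..Q*M+Q-1+r. F n)" by (rule sum_interval_grouped[OF assms])
  finally show ?thesis by (simp add: Aavg_def F_def)
qed

lemma abs_sum_diff_le_card:
  fixes f g :: "'a \<Rightarrow> real"
  assumes "finite A" "finite B" "I \<subseteq> A" "I \<subseteq> B" "\<And>n. n \<in> I \<Longrightarrow> f n = g n"
    and "\<And>n. n \<in> A \<Longrightarrow> \<bar>f n\<bar> \<le> 1" "\<And>n. n \<in> B \<Longrightarrow> \<bar>g n\<bar> \<le> 1"
  shows "\<bar>sum f A - sum g B\<bar> \<le> card (A - I) + card (B - I)"
proof -
  have "sum f A - sum g B = sum f (A - I) - sum g (B - I)"
    using assms(1-5) sum.subset_diff[of I A f] sum.subset_diff[of I B g] by simp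
  also have "\<bar>\<dots>\<bar> \<le> (\<Sum>n\<in>A - I. \<bar>f n\<bar>) + (\<Sum>n\<in>B - I. \<bar>g n\<bar>)"
    using abs_triangle_ineq4[of "sum f (A - I)" "sum g (B - I)"] sum_abs[of f "A - I"] sum_abs[of g "B - I"]
    by linarith
  also have "\<dots> \<le> real (card (A - I)) + real (card (B - I))"
    using assms(6,7) by (intro add_mono sum_bounded_above[where K=1, simplified]) auto
  finally show ?thesis by simp
qed

locale fast_growing =
  fixes q :: "nat \<Rightarrow> nat"
  assumes q_1: "2 \<le> q 1"
    and q_growth: "j \<ge> 1 \<Longrightarrow> q j ^ 4 + 3 * q j < q (j+1)"
begin

lemma q_ge_2: "j \<ge> 1 \<Longrightarrow> 2 \<le> q j"
proof (induction j rule: dec_induct)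
  case base
  show ?case by (rule q_1)
next
  case (step j)
  then show ?case using q_growth[of j] by simp
qed

lemma qq_pos: "k \<ge> 1 \<Longrightarrow> 0 < qq q l k"
  using q_ge_2[of "2*k"] q_ge_2[of "2*k+1"] by (auto simp: qq_def)

lemma qq_gap:
  assumes "k \<ge> 1"
  shows "3 * qq q l k < qq q l (k+1)"
proof -
  have step: "3 * q j < q (j+1)" if "j \<ge> 1" for j using q_growth[OF that] by simp
  have gap2: "3 * q j + 3 < q (j+2)" if "j \<ge> 1" for j
  proof -
    have "q j < q (j+1)" using step[OF that] q_ge_2[OF that] by linarith
    then show ?thesis using step[of "j+1"] by simp
  qed
  have "3 * q (2*k) + 3 < q (2*k+2)" "3 * q (2*k+1) + 3 < q (2*k+1+2)"
    using gap2[of "2*k"] gap2[of "2*k+1"] assms by simp_all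
  then show ?thesis by (auto simp: qq_def numeral_eq_Suc)
qed

lemma partial_sum_PP_zero:
  assumes "y \<in> PP q l" "k \<ge> 1"
  shows "partial_sum y (qq q l k - 1) = 0"
  using assms(2)
proof (induction k rule: dec_induct)
  case base
  have "y i = 0" if "i \<in> {1..qq q l 1 - 1}" for i
    using that assms(1) qq_pos[of 1] by (auto simp: PP_def)
  then show ?case by (simp add: partial_sum_def)
next
  case (step k)
  let ?Q = "qq q l k" and ?Q' = "qq q l (k+1)"
  have Q: "0 < ?Q" "3 * ?Q < ?Q'" using qq_pos qq_gap step(1) by auto
  obtain p where p: "p \<le> ?Q"
    "restr y ?Q (?Q' - 1) = restr (shiftR p (sseq q l k)) ?Q (?Q' - 1)"
    using assms(1) step(1) by (auto simp: PP_def RR_def)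
  have "Suc (?Q' - 1) = ?Q'" using Q by simp
  then have block: "y i = shiftR p (sseq q l k) i" if "i \<in> {?Q..<?Q'}" for i
    using p(2) that by (simp add: restr_def map_eq_conv)
  have "{1..?Q' - 1} = {1..?Q - 1} \<union> {?Q..<?Q'}" "{1..?Q - 1} \<inter> {?Q..<?Q'} = {}"
    using Q by auto
  then have "partial_sum y (?Q' - 1) = partial_sum y (?Q - 1) + (\<Sum>i\<in>{?Q..<?Q'}. y i)"
    unfolding partial_sum_def by (simp add: sum.union_disjoint)
  also have "(\<Sum>i\<in>{?Q..<?Q'}. y i) = 0"
    using block sum_shiftR_sseq_block[OF Q(1) p(1) Q(2)] by simp
  finally show ?case using step(3) by simp
qed

lemma orbit_average_estimate:
  fixes a :: "nat \<Rightarrow> real" and x :: "(nat \<Rightarrow> int) \<times> (int \<Rightarrow> int)"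
  assumes a_bound: "\<And>n. n \<ge> 1 \<Longrightarrow> \<bar>a n\<bar> \<le> 1"
    and k: "1 \<le> k" and M: "1 \<le> M" "M \<le> LL q l k" and r: "r \<le> qq q l k"
    and x_P: "fst x \<in> PP q l" and x_signs: "\<And>m. snd x m \<in> {-1,0,1}"
    and x_block: "\<And>n. qq q l k \<le> n \<Longrightarrow> n < qq q l (k+1) \<Longrightarrow>
        fst x n = shiftR r (sseq q l k) n \<and> real_of_int (snd x (int n)) = sgn (a (qq q l k * n + c))"
  shows "\<bar>(1 / (real (qq q l k) * real M)) * (\<Sum>n=1..qq q l k * M. real_of_int (gg ((TT ^^ n) x)) * a n)
      - Aavg (\<lambda>m. sgn (a m)) a (qq q l k) M r c\<bar> \<le> 8 * real (qq q l k) / real M"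
proof -
  define Q where "Q = qq q l k"
  define N where "N = Q * M"
  define K where "K = Q * Q + Q"
  define f where "f n = real_of_int (snd x (partial_sum (fst x) n)) * a n" for n
  define g where "g n = sgn (a (Q * ((n - r) div Q) + c)) * a n" for n
  have Q: "0 < Q" "3 * Q < qq q l (k+1)" "r \<le> Q" using qq_pos qq_gap k r by (auto simp: Q_def)
  have K: "2 * Q \<le> K" using Q(1) by (simp add: K_def)
  have "N \<le> Q * LL q l k" using M by (simp add: N_def)
  then have N: "N < qq q l (k+1)" using LL_bound[of q l k] Q by (simp add: Q_def ac_simps)
  have S: "partial_sum (fst x) n = int ((n - r) div Q)" if "Q - 1 \<le> n" "n \<le> N" for n
  proof (rule partial_sum_eq_div[OF Q(1) _ _ that])
    show "partial_sum (fst x) (Q - 1) = 0" using partial_sum_PP_zero[OF x_P k] by (simp add: Q_def)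
    show "fst x i = of_bool (r < i \<and> Q dvd i - r)" if "Q \<le> i" "i \<le> N" for i
      using that x_block[of i] shiftR_sseq_initial[of q l k i r] Q(1) N \<open>N \<le> Q * LL q l k\<close>
      by (simp add: Q_def)
  qed
  have agree: "f n = g n" if n: "n \<in> {K<..N}" for n
  proof -
    define j where "j = (n - r) div Q"
    have "Q * Q \<le> n - r" using n r unfolding K_def Q_def greaterThanAtMost_iff by linarith
    then have "Q \<le> j" using Q(1) by (simp add: j_def less_eq_div_iff_mult_less_eq)
    moreover have "j < qq q l (k+1)"
      using div_le_dividend[of "n - r" Q] n N unfolding j_def greaterThanAtMost_iff by linarith
    ultimately have "real_of_int (snd x (int j)) = sgn (a (Q * j + c))"
      using x_block[of j] by (simp add: Q_def)
    moreover have "Q - 1 \<le> n" using n K unfolding greaterThanAtMost_iff by linarith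
    ultimately show ?thesis using S[of n] n by (simp add: f_def g_def j_def)
  qed
  have card_bound: "card ({1..N} - {K<..N}) + card ({Q+r..N+Q-1+r} - {K<..N}) \<le> 8 * Q * Q"
  proof -
    have "card D \<le> K + 2 * Q" if "D \<subseteq> {1..K} \<union> {N<..N + 2 * Q}" for D
      using card_mono[OF _ that] card_Un_le[of "{1..K}" "{N<..N + 2 * Q}"] by simp
    moreover have "{1..N} - {K<..N} \<subseteq> {1..K} \<union> {N<..N + 2 * Q}"
      "{Q+r..N+Q-1+r} - {K<..N} \<subseteq> {1..K} \<union> {N<..N + 2 * Q}"
      using Q K by auto
    ultimately have "card ({1..N} - {K<..N}) + card ({Q+r..N+Q-1+r} - {K<..N}) \<le> (K + 2 * Q) + (K + 2 * Q)"
      by (blast intro: add_mono)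
    also have "\<dots> = 2 * (K + 2 * Q)" by simp
    also have "\<dots> \<le> 8 * Q * Q" using Q(1) by (simp add: K_def)
    finally show ?thesis .
  qed
  have "\<bar>sum f {1..N} - sum g {Q+r..N+Q-1+r}\<bar>
      \<le> card ({1..N} - {K<..N}) + card ({Q+r..N+Q-1+r} - {K<..N})"
  proof (rule abs_sum_diff_le_card)
    show "{K<..N} \<subseteq> {Q+r..N+Q-1+r}" using Q K by auto
    show "\<bar>f n\<bar> \<le> 1" if "n \<in> {1..N}" for n
      using that a_bound[of n] x_signs[of "partial_sum (fst x) n"]
      by (auto simp: f_def abs_mult intro: mult_le_one)
    show "\<bar>g n\<bar> \<le> 1" if "n \<in> {Q+r..N+Q-1+r}" for n
      using that a_bound[of n] Q(1) by (auto simp: g_def abs_mult abs_sgn_eq intro: mult_le_one)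
  qed (use agree in auto)
  also have "\<dots> \<le> 8 * real Q * real Q" using of_nat_mono[OF card_bound] by simp
  finally have bound: "\<bar>sum f {1..N} - sum g {Q+r..N+Q-1+r}\<bar> \<le> 8 * real Q * real Q" .
  have orbit_sum: "(\<Sum>n=1..N. real_of_int (gg ((TT ^^ n) x)) * a n) = sum f {1..N}"
    by (simp add: f_def gg_funpow_TT)
  have Aavg_sum: "Aavg (\<lambda>m. sgn (a m)) a Q M r c = sum g {Q+r..N+Q-1+r} / (real Q * real M)"
    using Aavg_eq_interval_sum[OF Q(1)] by (simp add: g_def N_def)
  have QM: "0 < real Q * real M" using Q(1) M(1) by simp
  have "\<bar>(1 / (real Q * real M)) * (\<Sum>n=1..N. real_of_int (gg ((TT ^^ n) x)) * a n)
      - Aavg (\<lambda>m. sgn (a m)) a Q M r c\<bar>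
      = \<bar>sum f {1..N} - sum g {Q+r..N+Q-1+r}\<bar> / (real Q * real M)"
    unfolding orbit_sum Aavg_sum by (simp add: abs_divide flip: diff_divide_distrib)
  also have "\<dots> \<le> 8 * real Q * real Q / (real Q * real M)"
    using bound QM by (intro divide_right_mono) simp_all
  also have "\<dots> = 8 * real Q / real M" using Q(1) by simp
  finally show ?thesis unfolding Q_def N_def .
qed

end

theorem mainTheorem7:
  shows "\<exists>C>0. \<forall>(\<tau>::nat \<Rightarrow> real) (q::nat \<Rightarrow> nat) (a::nat \<Rightarrow> real) (l::nat) (k::nat) (M::nat)
      (r::nat) (c::nat) (x::(nat \<Rightarrow> int) \<times> (int \<Rightarrow> int)).
    (\<forall>n. \<tau> n > 0) \<and> antimono \<tau> \<and> \<tau> \<longlonglongrightarrow> 0 \<and>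
    2 \<le> q 1 \<and> (\<forall>j\<ge>1. q j < q (j+1)) \<and>
    (\<forall>j\<ge>1. q (j+1) > q j ^ 4 + 3 * q j) \<and>
    (\<forall>j\<ge>1. \<tau> (nat \<lceil>real (q (j+1)) / 3\<rceil>) < 1 / (16 * real (q j))) \<and>
    (\<forall>n\<ge>1. \<bar>a n\<bar> \<le> 1) \<and>
    l \<le> 3 \<and> 1 \<le> k \<and> 1 \<le> M \<and> M \<le> LL q l k \<and>
    r \<le> qq q l k \<and> c \<le> qq q l k \<and>
    fst x \<in> PP q l \<and> (\<forall>m. snd x m \<in> {-1,0,1}) \<and>
    (\<forall>n. qq q l k \<le> n \<and> n < qq q l (k+1) \<longrightarrow>
        fst x n = shiftR r (sseq q l k) n \<and>
        real_of_int (snd x (int n)) = sgn (a (qq q l k * n + c)))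
    \<longrightarrow>
    \<bar>(1 / (real (qq q l k) * real M)) *
        (\<Sum>n=1..qq q l k * M. real_of_int (gg ((TT ^^ n) x)) * a n)
      - Aavg (\<lambda>m. sgn (a m)) a (qq q l k) M r c\<bar>
    \<le> C * real (qq q l k) / real M"
proof (intro exI[of _ 8] conjI allI impI, goal_cases)
  case (2 \<tau> q a l k M r c x)
  then have "fast_growing q" by (simp add: fast_growing_def)
  from fast_growing.orbit_average_estimate[OF this] 2 show ?case by blast
qed simp

end
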